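(* Let $G_0,G_1$ be groups, $X_i$ a right $G_i$-set and $p_i:X_i\to G_i$ augmented racks ($i=0,1$), with $G_1$ acting on $X_1$ by $(x,g)\mapsto x*g$ and $G_0$ acting on $X_0$ by $(y,h)\mapsto y\cdot h$. Let $\beta:G_1\to G_0$ be a group homomorphism and $\alpha:X_1\to X_0$ a map with $\alpha(x*g)=\alpha(x)\cdot\beta(g)$ and $p_0\circ\alpha=\beta\circ p_1$. Suppose there is a right action $(x,g)\mapsto x\circ g$ of $G_0$ on $X_1$ such that (1) $x*g=x\circ\beta(g)$ for all $g\in G_1$, $x\in X_1$; (2) $\alpha(x\circ g)=\alpha(x)\cdot g$ for all $g\in G_0$, $x\in X_1$; (3) $(y*p_1(x))\circ g=(y\circ g)*p_1(x\circ g)$ for all $g\in G_0$, $x,y\in X_1$. Then, equipping $X_1$ and $X_0$ with the rack structures $x\lhd y:=x*p_1(y)$ and $x\lhd y:=x\cdot p_0(y)$ respectively, and letting $X_0$ act on $X_1$ by $x\cdot y:=x\circ p_0(y)$, the map $\alpha:X_1\to X_0$ is a crossed module of racks.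
   Context: A (right) rack is a set with a binary operation $\lhd$ such that each $x\mapsto x\lhd y$ is bijective and $(x\lhd y)\lhd z=(x\lhd z)\lhd(y\lhd z)$. For a group $G$ and a right $G$-set $X$, a map $p:X\to G$ is an augmented rack if $p(x\cdot g)=g^{-1}p(x)g$ for all $x\in X,g\in G$; then $x\lhd y:=x\cdot p(y)$ is a rack operation on $X$. An action of a rack $S$ on a set $A$ is a family of bijections $a\mapsto a\cdot s$ with $(a\cdot s)\cdot s'=(a\cdot s')\cdot(s\lhd s')$; if $A$ is a rack it is by automorphisms if also $(a\lhd a')\cdot s=(a\cdot s)\lhd(a'\cdot s)$. A crossed module of racks is a rack morphism $\mu:A\to S$ with an action of $S$ on $A$ by automorphisms such that $\mu(a\cdot s)=\mu(a)\lhd s$ and $a\cdot\mu(a')=a\lhd a'$ for all $a,a'\in A$, $s\in S$. *)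

theory Defs
  imports "HOL-Algebra.Group"
begin

definition right_action :: "('g, 'b) monoid_scheme \<Rightarrow> 'x set \<Rightarrow> ('x \<Rightarrow> 'g \<Rightarrow> 'x) \<Rightarrow> bool" where
  "right_action G X act \<longleftrightarrow> group G \<and>
     (\<forall>x\<in>X. \<forall>g\<in>carrier G. act x g \<in> X) \<and>
     (\<forall>x\<in>X. act x \<one>\<^bsub>G\<^esub> = x) \<and>
     (\<forall>x\<in>X. \<forall>g\<in>carrier G. \<forall>h\<in>carrier G. act (act x g) h = act x (g \<otimes>\<^bsub>G\<^esub> h))"

definition augmented_rack :: "('g, 'b) monoid_scheme \<Rightarrow> 'x set \<Rightarrow> ('x \<Rightarrow> 'g \<Rightarrow> 'x) \<Rightarrow> ('x \<Rightarrow> 'g) \<Rightarrow> bool" where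
  "augmented_rack G X act p \<longleftrightarrow> right_action G X act \<and> p \<in> X \<rightarrow> carrier G \<and>
     (\<forall>x\<in>X. \<forall>g\<in>carrier G. p (act x g) = inv\<^bsub>G\<^esub> g \<otimes>\<^bsub>G\<^esub> p x \<otimes>\<^bsub>G\<^esub> g)"

definition rack :: "'a set \<Rightarrow> ('a \<Rightarrow> 'a \<Rightarrow> 'a) \<Rightarrow> bool" where
  "rack X op \<longleftrightarrow>
     (\<forall>x\<in>X. \<forall>y\<in>X. op x y \<in> X) \<and>
     (\<forall>y\<in>X. bij_betw (\<lambda>x. op x y) X X) \<and>
     (\<forall>x\<in>X. \<forall>y\<in>X. \<forall>z\<in>X. op (op x y) z = op (op x z) (op y z))"

definition rack_hom :: "'a set \<Rightarrow> ('a \<Rightarrow> 'a \<Rightarrow> 'a) \<Rightarrow> 's set \<Rightarrow> ('s \<Rightarrow> 's \<Rightarrow> 's) \<Rightarrow> ('a \<Rightarrow> 's) \<Rightarrow> bool" where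
  "rack_hom A opA S opS f \<longleftrightarrow> rack A opA \<and> rack S opS \<and> f \<in> A \<rightarrow> S \<and>
     (\<forall>a\<in>A. \<forall>a'\<in>A. f (opA a a') = opS (f a) (f a'))"

definition rack_action :: "'s set \<Rightarrow> ('s \<Rightarrow> 's \<Rightarrow> 's) \<Rightarrow> 'a set \<Rightarrow> ('a \<Rightarrow> 's \<Rightarrow> 'a) \<Rightarrow> bool" where
  "rack_action S opS A act \<longleftrightarrow>
     (\<forall>s\<in>S. bij_betw (\<lambda>a. act a s) A A) \<and>
     (\<forall>a\<in>A. \<forall>s\<in>S. \<forall>s'\<in>S. act (act a s) s' = act (act a s') (opS s s'))"

definition rack_action_by_aut :: "'s set \<Rightarrow> ('s \<Rightarrow> 's \<Rightarrow> 's) \<Rightarrow> 'a set \<Rightarrow> ('a \<Rightarrow> 'a \<Rightarrow> 'a) \<Rightarrow> ('a \<Rightarrow> 's \<Rightarrow> 'a) \<Rightarrow> bool" where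
  "rack_action_by_aut S opS A opA act \<longleftrightarrow> rack_action S opS A act \<and>
     (\<forall>a\<in>A. \<forall>a'\<in>A. \<forall>s\<in>S. act (opA a a') s = opA (act a s) (act a' s))"

definition crossed_module_racks ::
  "'a set \<Rightarrow> ('a \<Rightarrow> 'a \<Rightarrow> 'a) \<Rightarrow> 's set \<Rightarrow> ('s \<Rightarrow> 's \<Rightarrow> 's) \<Rightarrow> ('a \<Rightarrow> 's \<Rightarrow> 'a) \<Rightarrow> ('a \<Rightarrow> 's) \<Rightarrow> bool" where
  "crossed_module_racks A opA S opS act \<mu> \<longleftrightarrow>
     rack_hom A opA S opS \<mu> \<and> rack_action_by_aut S opS A opA act \<and>
     (\<forall>a\<in>A. \<forall>s\<in>S. \<mu> (act a s) = opS (\<mu> a) s) \<and>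
     (\<forall>a\<in>A. \<forall>a'\<in>A. act a (\<mu> a') = opA a a')"

end

theory Submission
  imports Defs
begin

text \<open>Every rack axiom in the conclusion comes from one identity of right actions,
  \<open>(a\<cdot>g)\<cdot>h = (a\<cdot>h)\<cdot>(h\<inverse>gh)\<close>: composed with an augmentation \<open>p\<close>, whose equivariance turns
  \<open>h\<inverse>p(s)h\<close> into \<open>p(s\<cdot>h)\<close>, it makes any \<open>G\<close>-set a rack-set over the augmented rack.
  Taking the \<open>G\<^sub>0\<close>-action \<open>\<circ>\<close> gives the action of \<open>X\<^sub>0\<close> on \<open>X\<^sub>1\<close>; hypothesis (3) says it is
  by automorphisms, and the two crossed-module equations are hypotheses (2) and (1)
  combined with \<open>p\<^sub>0\<circ>\<alpha> = \<beta>\<circ>p\<^sub>1\<close>.\<close>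

lemma right_action_bij:
  fixes G (structure)
  assumes "right_action G X act" "g \<in> carrier G"
  shows "bij_betw (\<lambda>x. act x g) X X"
proof -
  interpret group G using assms(1) unfolding right_action_def by blast
  have closed: "\<forall>x\<in>X. \<forall>g\<in>carrier G. act x g \<in> X" and unit: "\<forall>x\<in>X. act x \<one> = x"
    and compose: "\<forall>x\<in>X. \<forall>g\<in>carrier G. \<forall>h\<in>carrier G. act (act x g) h = act x (g \<otimes> h)"
    using assms(1) unfolding right_action_def by blast+
  show ?thesis
  proof (rule bij_betw_byWitness[where f'="\<lambda>x. act x (inv g)"])
    show "\<forall>x\<in>X. act (act x g) (inv g) = x" "\<forall>x\<in>X. act (act x (inv g)) g = x"
      using closed unit compose assms(2) by simp_all
    show "(\<lambda>x. act x g) ` X \<subseteq> X" "(\<lambda>x. act x (inv g)) ` X \<subseteq> X"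
      using closed assms(2) by auto
  qed
qed

lemma right_action_conjugate:
  fixes G (structure)
  assumes "right_action G X act" "a \<in> X" "g \<in> carrier G" "h \<in> carrier G"
  shows "act (act a g) h = act (act a h) (inv h \<otimes> g \<otimes> h)"
proof -
  interpret group G using assms(1) unfolding right_action_def by blast
  have compose: "\<forall>x\<in>X. \<forall>g\<in>carrier G. \<forall>h\<in>carrier G. act (act x g) h = act x (g \<otimes> h)"
    using assms(1) unfolding right_action_def by blast
  have "h \<otimes> (inv h \<otimes> g \<otimes> h) = g \<otimes> h"
    using assms(3,4) by (simp add: m_assoc[symmetric])
  then show ?thesis using compose assms(2-4) by simp
qed

lemma augmented_rack_induces_rack_action:
  assumes "augmented_rack G S dot p" and "right_action G A act"
  shows "rack_action S (\<lambda>x y. dot x (p y)) A (\<lambda>a s. act a (p s))"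
proof -
  have p: "p \<in> S \<rightarrow> carrier G"
    and p_equivariant: "\<forall>x\<in>S. \<forall>g\<in>carrier G. p (dot x g) = inv\<^bsub>G\<^esub> g \<otimes>\<^bsub>G\<^esub> p x \<otimes>\<^bsub>G\<^esub> g"
    using assms(1) unfolding augmented_rack_def by blast+
  show ?thesis unfolding rack_action_def
  proof (intro conjI ballI)
    fix s assume "s \<in> S"
    then show "bij_betw (\<lambda>a. act a (p s)) A A" using right_action_bij[OF assms(2)] p by blast
  next
    fix a s s' assume "a \<in> A" "s \<in> S" "s' \<in> S"
    then show "act (act a (p s)) (p s') = act (act a (p s')) (p (dot s (p s')))"
      using right_action_conjugate[OF assms(2), of a "p s" "p s'"] p_equivariant p by (auto simp: Pi_iff)
  qed
qed

lemma augmented_rack_is_rack: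
  assumes "augmented_rack G X act p"
  shows "rack X (\<lambda>x y. act x (p y))"
proof -
  have action: "right_action G X act" and p: "p \<in> X \<rightarrow> carrier G"
    using assms unfolding augmented_rack_def by blast+
  have closed: "\<forall>x\<in>X. \<forall>g\<in>carrier G. act x g \<in> X"
    using action unfolding right_action_def by blast
  have "rack_action X (\<lambda>x y. act x (p y)) X (\<lambda>x y. act x (p y))"
    by (rule augmented_rack_induces_rack_action[OF assms action])
  then show ?thesis using closed p unfolding rack_def rack_action_def by blast
qed

theorem mainTheorem7:
  fixes G0 :: "('g0, 'b0) monoid_scheme" and G1 :: "('g1, 'b1) monoid_scheme"
    and X0 :: "'x0 set" and X1 :: "'x1 set"
    and dot :: "'x0 \<Rightarrow> 'g0 \<Rightarrow> 'x0" and star :: "'x1 \<Rightarrow> 'g1 \<Rightarrow> 'x1"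
    and p0 :: "'x0 \<Rightarrow> 'g0" and p1 :: "'x1 \<Rightarrow> 'g1"
    and \<beta> :: "'g1 \<Rightarrow> 'g0" and \<alpha> :: "'x1 \<Rightarrow> 'x0"
    and circ :: "'x1 \<Rightarrow> 'g0 \<Rightarrow> 'x1"
  assumes "group G0" and "group G1"
    and "augmented_rack G0 X0 dot p0"
    and "augmented_rack G1 X1 star p1"
    and "group_hom G1 G0 \<beta>"
    and "\<alpha> \<in> X1 \<rightarrow> X0"
    and "\<forall>x\<in>X1. \<forall>g\<in>carrier G1. \<alpha> (star x g) = dot (\<alpha> x) (\<beta> g)"
    and "\<forall>x\<in>X1. p0 (\<alpha> x) = \<beta> (p1 x)"
    and "right_action G0 X1 circ"
    and "\<forall>g\<in>carrier G1. \<forall>x\<in>X1. star x g = circ x (\<beta> g)"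
    and "\<forall>g\<in>carrier G0. \<forall>x\<in>X1. \<alpha> (circ x g) = dot (\<alpha> x) g"
    and "\<forall>g\<in>carrier G0. \<forall>x\<in>X1. \<forall>y\<in>X1.
           circ (star y (p1 x)) g = star (circ y g) (p1 (circ x g))"
  shows "crossed_module_racks X1 (\<lambda>x y. star x (p1 y)) X0 (\<lambda>x y. dot x (p0 y))
           (\<lambda>x y. circ x (p0 y)) \<alpha>"
proof -
  have p0: "p0 \<in> X0 \<rightarrow> carrier G0" and p1: "p1 \<in> X1 \<rightarrow> carrier G1"
    using assms(3,4) unfolding augmented_rack_def by blast+
  have "rack_hom X1 (\<lambda>x y. star x (p1 y)) X0 (\<lambda>x y. dot x (p0 y)) \<alpha>"
    unfolding rack_hom_def
    using augmented_rack_is_rack[OF assms(3)] augmented_rack_is_rack[OF assms(4)]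
      assms(6-8) p1 by (auto simp: Pi_iff)
  moreover have "rack_action X0 (\<lambda>x y. dot x (p0 y)) X1 (\<lambda>x y. circ x (p0 y))"
    by (rule augmented_rack_induces_rack_action[OF assms(3,9)])
  then have "rack_action_by_aut X0 (\<lambda>x y. dot x (p0 y)) X1 (\<lambda>x y. star x (p1 y))
      (\<lambda>x y. circ x (p0 y))"
    unfolding rack_action_by_aut_def using assms(12) p0 by auto
  ultimately show ?thesis unfolding crossed_module_racks_def
    using assms(8,10,11) p0 p1 by (auto simp: Pi_iff)
qed

end
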